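(* Let $A\in\{0,1\}^{N\times n}$ and let $U_1,\dots,U_N,V_1,\dots,V_n\in\mathbb{R}^d$ be a margin-$m$, relative-bias-$0$ embedding of $A$. Define the linear map $V:\mathbb{R}^n\to\mathbb{R}^d$ by $Ve_i=V_i$. Suppose $S\subseteq[n]$ is shattered by the family of row supports $\mathcal{C}_A=\{\{i\in[n]:A_{ji}=1\}: j\in[N]\}$. Then every $x\in\mathbb{R}^n$ supported on $S$ satisfies $\|Vx\|_2\ge m\|x\|_1$.
   Context: For $A\in\{0,1\}^{N\times n}$ and $m\ge0$, unit vectors $U_1,\dots,U_N,V_1,\dots,V_n\in\mathbb{R}^d$ form a margin-$m$, relative-bias-$0$ embedding of $A$ if $\langle U_j,V_i\rangle\ge m$ whenever $A_{ji}=1$ and $\langle U_j,V_i\rangle\le -m$ whenever $A_{ji}=0$. A set $B\subseteq[n]$ is shattered by a family $\mathcal{S}$ of subsets of $[n]$ if for every $C\subseteq B$ there is $S'\in\mathcal{S}$ with $S'\cap B=C$. *)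

theory Defs
  imports "HOL-Analysis.Analysis"
begin

text \<open>Matrices A in {0,1}^(N x n) are functions nat => nat => nat with entries
  in {0,1} on {0..<N} x {0..<n}; row j, column i, indices 0-based.\<close>

definition zero_one_matrix :: "nat \<Rightarrow> nat \<Rightarrow> (nat \<Rightarrow> nat \<Rightarrow> nat) \<Rightarrow> bool" where
  "zero_one_matrix N n A \<longleftrightarrow> (\<forall>j<N. \<forall>i<n. A j i \<in> {0, 1})"

definition margin_embedding ::
  "nat \<Rightarrow> nat \<Rightarrow> (nat \<Rightarrow> nat \<Rightarrow> nat) \<Rightarrow> real \<Rightarrow> (nat \<Rightarrow> 'a::real_inner) \<Rightarrow> (nat \<Rightarrow> 'a) \<Rightarrow> bool" where
  "margin_embedding N n A m U V \<longleftrightarrow>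
     (\<forall>j<N. norm (U j) = 1) \<and> (\<forall>i<n. norm (V i) = 1) \<and>
     (\<forall>j<N. \<forall>i<n. (A j i = 1 \<longrightarrow> inner (U j) (V i) \<ge> m) \<and>
                    (A j i = 0 \<longrightarrow> inner (U j) (V i) \<le> - m))"

definition row_supports :: "nat \<Rightarrow> nat \<Rightarrow> (nat \<Rightarrow> nat \<Rightarrow> nat) \<Rightarrow> nat set set" where
  "row_supports N n A = (\<lambda>j. {i \<in> {0..<n}. A j i = 1}) ` {0..<N}"

definition shattered_by :: "'b set \<Rightarrow> 'b set set \<Rightarrow> bool" where
  "shattered_by B \<S> \<longleftrightarrow> (\<forall>C. C \<subseteq> B \<longrightarrow> (\<exists>S'\<in>\<S>. S' \<inter> B = C))"

definition lin_map :: "nat \<Rightarrow> (nat \<Rightarrow> 'a::real_vector) \<Rightarrow> (nat \<Rightarrow> real) \<Rightarrow> 'a" where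
  "lin_map n V x = (\<Sum>i<n. x i *\<^sub>R V i)"

definition l1_norm :: "nat \<Rightarrow> (nat \<Rightarrow> real) \<Rightarrow> real" where
  "l1_norm n x = (\<Sum>i<n. \<bar>x i\<bar>)"

end

theory Submission
  imports Defs
begin

text \<open>Shattering provides a row j whose support agrees on S with the set of positive
  coordinates of x. The margin condition then gives x_i <U_j, V_i> \<ge> m |x_i| for every i,
  so summing yields <U_j, V x> \<ge> m ||x||_1, and Cauchy-Schwarz with ||U_j|| = 1 finishes.\<close>

lemma margin_mult_ge_abs:
  fixes t s m :: real
  assumes "t > 0 \<Longrightarrow> s \<ge> m" and "t \<le> 0 \<Longrightarrow> s \<le> - m"
  shows "m * \<bar>t\<bar> \<le> t * s"
proof (cases "t > 0")
  case True
  then show ?thesis using assms(1) by (simp add: mult_left_mono mult.commute)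
next
  case False
  then have "t * (- m) \<le> t * s" using assms(2) by (intro mult_left_mono_neg) auto
  then show ?thesis using False by (simp add: abs_if algebra_simps)
qed

lemma norm_lin_map_ge_by_witness:
  fixes u :: "'a::real_inner" and V :: "nat \<Rightarrow> 'a"
  assumes "norm u \<le> 1"
    and "\<And>i. i < n \<Longrightarrow> m * \<bar>x i\<bar> \<le> x i * inner u (V i)"
  shows "m * l1_norm n x \<le> norm (lin_map n V x)"
proof -
  have "m * l1_norm n x = (\<Sum>i<n. m * \<bar>x i\<bar>)"
    unfolding l1_norm_def by (simp add: sum_distrib_left)
  also have "\<dots> \<le> (\<Sum>i<n. x i * inner u (V i))"
    using assms(2) by (intro sum_mono) auto
  also have "\<dots> = inner u (lin_map n V x)"
    unfolding lin_map_def by (simp add: inner_sum_right)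
  also have "\<dots> \<le> norm u * norm (lin_map n V x)"
    by (rule norm_cauchy_schwarz)
  also have "\<dots> \<le> norm (lin_map n V x)"
    using assms(1) by (simp add: mult_left_le_one_le)
  finally show ?thesis .
qed

lemma shattered_row_support_sign_pattern:
  assumes "shattered_by S (row_supports N n A)"
  obtains j where "j < N" and "\<And>i. i \<in> S \<Longrightarrow> i < n \<Longrightarrow> A j i = 1 \<longleftrightarrow> x i > 0"
proof -
  have "{i \<in> S. x i > 0} \<subseteq> S" by blast
  then obtain S' where "S' \<in> row_supports N n A" and S': "S' \<inter> S = {i \<in> S. x i > 0}"
    using assms unfolding shattered_by_def by meson
  then obtain j where "j < N" and "S' = {i \<in> {0..<n}. A j i = 1}"
    unfolding row_supports_def by auto
  with S' show ?thesis using that by (simp add: set_eq_iff) blast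
qed

theorem lemmaF1:
  fixes N n :: nat and A :: "nat \<Rightarrow> nat \<Rightarrow> nat" and m :: real
    and U V :: "nat \<Rightarrow> real ^ 'd" and S :: "nat set" and x :: "nat \<Rightarrow> real"
  assumes "zero_one_matrix N n A"
    and "m \<ge> 0"
    and "margin_embedding N n A m U V"
    and "S \<subseteq> {0..<n}"
    and "shattered_by S (row_supports N n A)"
    and "\<forall>i. i \<notin> S \<longrightarrow> x i = 0"
  shows "norm (lin_map n V x) \<ge> m * l1_norm n x"
proof -
  obtain j where j: "j < N" and sign: "\<And>i. i \<in> S \<Longrightarrow> i < n \<Longrightarrow> A j i = 1 \<longleftrightarrow> x i > 0"
    using shattered_row_support_sign_pattern assms(5) by blast
  have "norm (U j) \<le> 1"
    using assms(3) j unfolding margin_embedding_def by simp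
  moreover have "m * \<bar>x i\<bar> \<le> x i * inner (U j) (V i)" if "i < n" for i
  proof (cases "i \<in> S")
    case True
    have "A j i \<in> {0, 1}"
      using assms(1) j \<open>i < n\<close> unfolding zero_one_matrix_def by blast
    then show ?thesis
      using assms(3) j \<open>i < n\<close> sign[OF True \<open>i < n\<close>]
      unfolding margin_embedding_def by (intro margin_mult_ge_abs) auto
  qed (use assms(6) in simp)
  ultimately show ?thesis by (rule norm_lin_map_ge_by_witness)
qed

end
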